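(* Let $G$ be an unmixed chordal graph and let $x$ be a simplicial vertex of $G$. Then $G\setminus\{y\}$ is unmixed for every $y\in N_G(x)$.
   Context: A graph is chordal if every cycle of length at least four has a chord; a vertex is simplicial if its neighbors form a clique. $N_G(x)$ is the set of neighbors of $x$, and $G\setminus\{y\}$ is the induced subgraph on $V(G)\setminus\{y\}$. A graph is unmixed if all its maximal independent sets have the same cardinality. *)

theory Defs
  imports Main
begin

definition graph :: "'a set \<Rightarrow> 'a set set \<Rightarrow> bool" where
  "graph V E \<longleftrightarrow> finite V \<and> (\<forall>e\<in>E. e \<subseteq> V \<and> card e = 2)"

definition adj :: "'a set set \<Rightarrow> 'a \<Rightarrow> 'a \<Rightarrow> bool" where
  "adj E u v \<longleftrightarrow> {u, v} \<in> E"

definition neighbors :: "'a set \<Rightarrow> 'a set set \<Rightarrow> 'a \<Rightarrow> 'a set" where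
  "neighbors V E x = {y \<in> V. adj E x y}"

definition del_vertex_edges :: "'a set set \<Rightarrow> 'a \<Rightarrow> 'a set set" where
  "del_vertex_edges E y = {e \<in> E. y \<notin> e}"

definition is_clique :: "'a set set \<Rightarrow> 'a set \<Rightarrow> bool" where
  "is_clique E S \<longleftrightarrow> (\<forall>u\<in>S. \<forall>v\<in>S. u \<noteq> v \<longrightarrow> adj E u v)"

definition simplicial :: "'a set \<Rightarrow> 'a set set \<Rightarrow> 'a \<Rightarrow> bool" where
  "simplicial V E x \<longleftrightarrow> x \<in> V \<and> is_clique E (neighbors V E x)"

definition is_cycle :: "'a set \<Rightarrow> 'a set set \<Rightarrow> 'a list \<Rightarrow> bool" where
  "is_cycle V E cs \<longleftrightarrow> length cs \<ge> 3 \<and> distinct cs \<and> set cs \<subseteq> V \<and>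
     (\<forall>i < length cs. adj E (cs ! i) (cs ! ((i + 1) mod length cs)))"

definition has_chord :: "'a set set \<Rightarrow> 'a list \<Rightarrow> bool" where
  "has_chord E cs \<longleftrightarrow> (\<exists>i < length cs. \<exists>j < length cs.
     j \<noteq> (i + 1) mod length cs \<and> i \<noteq> (j + 1) mod length cs \<and> i \<noteq> j \<and>
     adj E (cs ! i) (cs ! j))"

definition chordal :: "'a set \<Rightarrow> 'a set set \<Rightarrow> bool" where
  "chordal V E \<longleftrightarrow> (\<forall>cs. is_cycle V E cs \<and> length cs \<ge> 4 \<longrightarrow> has_chord E cs)"

definition independent :: "'a set \<Rightarrow> 'a set set \<Rightarrow> 'a set \<Rightarrow> bool" where
  "independent V E S \<longleftrightarrow> S \<subseteq> V \<and> (\<forall>u\<in>S. \<forall>v\<in>S. \<not> adj E u v)"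

definition maximal_independent :: "'a set \<Rightarrow> 'a set set \<Rightarrow> 'a set \<Rightarrow> bool" where
  "maximal_independent V E S \<longleftrightarrow> independent V E S \<and>
     (\<forall>T. independent V E T \<and> S \<subseteq> T \<longrightarrow> T = S)"

definition unmixed :: "'a set \<Rightarrow> 'a set set \<Rightarrow> bool" where
  "unmixed V E \<longleftrightarrow> (\<forall>S T. maximal_independent V E S \<and> maximal_independent V E T
     \<longrightarrow> card S = card T)"

end

theory Submission
  imports Defs
begin

text \<open>A maximal independent set S of G - y is already maximal in G: it dominates every
  vertex other than y, and it dominates y as well, since the vertex of S adjacent to x
  (or x itself) lies in the clique N(x) together with y.\<close>

lemma adj_commute: "adj E u v \<longleftrightarrow> adj E v u"
  unfolding adj_def by (simp add: insert_commute)

lemma adj_del_vertex_edges: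
  "adj (del_vertex_edges E y) u v \<longleftrightarrow> adj E u v \<and> u \<noteq> y \<and> v \<noteq> y"
  unfolding adj_def del_vertex_edges_def by auto

lemma graph_not_adj_self:
  assumes "graph V E"
  shows "\<not> adj E v v"
  using assms unfolding graph_def adj_def by fastforce

lemma independent_del_vertex_iff:
  "independent (V - {y}) (del_vertex_edges E y) S \<longleftrightarrow> independent V E S \<and> y \<notin> S"
  unfolding independent_def by (auto simp: adj_del_vertex_edges)

lemma maximal_independent_dominates:
  assumes loopfree: "\<And>v. \<not> adj E v v"
    and S: "maximal_independent V E S" and v: "v \<in> V - S"
  shows "\<exists>u\<in>S. adj E v u"
proof (rule ccontr)
  assume "\<not> (\<exists>u\<in>S. adj E v u)"
  then have "\<forall>u\<in>S. \<not> adj E u v" by (auto simp: adj_commute)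
  with \<open>\<not> (\<exists>u\<in>S. adj E v u)\<close> have "independent V E (insert v S)"
    using S v loopfree unfolding maximal_independent_def independent_def by blast
  then show False
    using S v unfolding maximal_independent_def by blast
qed

lemma dominating_independent_maximal:
  assumes S: "independent V E S" and dom: "\<And>v. v \<in> V - S \<Longrightarrow> \<exists>u\<in>S. adj E v u"
  shows "maximal_independent V E S"
  unfolding maximal_independent_def
proof (intro conjI allI impI)
  fix T assume T: "independent V E T \<and> S \<subseteq> T"
  show "T = S"
  proof (rule ccontr)
    assume "T \<noteq> S"
    then obtain v where "v \<in> T - S" using T by blast
    moreover from this obtain u where "u \<in> S" "adj E v u"
      using T dom unfolding independent_def by blast
    ultimately show False using T unfolding independent_def by blast
  qed
qed (fact S)

lemma maximal_independent_del_simplicial_neighbor: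
  assumes G: "graph V E" and x: "simplicial V E x" and y: "y \<in> neighbors V E x"
    and S: "maximal_independent (V - {y}) (del_vertex_edges E y) S"
  shows "maximal_independent V E S"
proof -
  have loopfree: "\<And>v. \<not> adj E v v" using G by (rule graph_not_adj_self)
  then have loopfree_del: "\<And>v. \<not> adj (del_vertex_edges E y) v v"
    by (simp add: adj_del_vertex_edges)
  have indep: "independent V E S" and "y \<notin> S"
    using S unfolding maximal_independent_def independent_del_vertex_iff by auto
  have dom_del: "\<exists>u\<in>S. adj E v u" if "v \<in> V - S" "v \<noteq> y" for v
    using maximal_independent_dominates[OF loopfree_del S] that
    by (auto simp: adj_del_vertex_edges)
  have xy: "adj E x y" and "x \<in> V" and "x \<noteq> y"
    using x y loopfree unfolding simplicial_def neighbors_def by auto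
  have dom_y: "\<exists>u\<in>S. adj E y u"
  proof (cases "x \<in> S")
    case True
    then show ?thesis using xy adj_commute by metis
  next
    case False
    then obtain z where z: "z \<in> S" "adj E x z"
      using dom_del \<open>x \<in> V\<close> \<open>x \<noteq> y\<close> by blast
    then have "z \<in> neighbors V E x" "z \<noteq> y"
      using indep \<open>y \<notin> S\<close> unfolding independent_def neighbors_def by auto
    then have "adj E z y"
      using x y unfolding simplicial_def is_clique_def by blast
    then show ?thesis using z(1) adj_commute by metis
  qed
  show ?thesis
  proof (rule dominating_independent_maximal[OF indep])
    fix v assume "v \<in> V - S"
    then show "\<exists>u\<in>S. adj E v u" using dom_del dom_y by (cases "v = y") auto
  qed
qed

theorem proposition3p4:
  fixes V :: "'a set" and E :: "'a set set" and x y :: 'a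
  assumes "graph V E"
    and "chordal V E"
    and "unmixed V E"
    and "simplicial V E x"
    and "y \<in> neighbors V E x"
  shows "unmixed (V - {y}) (del_vertex_edges E y)"
  using maximal_independent_del_simplicial_neighbor[OF assms(1,4,5)] assms(3)
  unfolding unmixed_def by blast

end
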